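(* Let $p$ be an odd prime and $m$ a positive integer not divisible by $p$. Then $$\sum_{r=1}^m rK_p(r,m)\equiv-q_p(m)\pmod p,$$ where $K_p(r,m)=\sum_{1\le k\le p-1,\ m\mid k-rp}\frac1k$ and $q_p(m)=(m^{p-1}-1)/p$ is the Fermat quotient.
   Context: Congruences modulo $p$ are between rational numbers whose denominators are prime to $p$. *)

theory Defs
  imports "HOL-Number_Theory.Number_Theory"
begin

definition p_integral :: "int \<Rightarrow> rat \<Rightarrow> bool" where
  "p_integral p x = (\<not> p dvd snd (quotient_of x))"

definition rat_cong :: "rat \<Rightarrow> rat \<Rightarrow> int \<Rightarrow> bool" where
  "rat_cong a b p = (p_integral p a \<and> p_integral p b \<and>
     (\<exists>u. p_integral p u \<and> a - b = of_int p * u))"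

definition K :: "nat \<Rightarrow> nat \<Rightarrow> nat \<Rightarrow> rat" where
  "K p r m = (\<Sum>k\<in>{k. 1 \<le> k \<and> k \<le> p - 1 \<and> (int m) dvd (int k - int r * int p)}. 1 / of_nat k)"

definition fermat_quotient :: "nat \<Rightarrow> nat \<Rightarrow> rat" where
  "fermat_quotient p m = (of_nat m ^ (p - 1) - 1) / of_nat p"

end

theory Submission
  imports Defs
begin

(* Write m j = f_j p + s_j for 0 < j < p. Since p does not divide m, j |-> s_j permutes {1..p-1}.
   The pairs (r, k) counted by the K_p(r, m) are exactly the pairs (f_j + 1, p - s_j), because
   r p - k = m j. Hence, using 1/(p - s) = -1/s (mod p), the left-hand side is congruent to
   -(sum of (f_j + 1) / s_j) = -(sum of f_j / s_j) - H, where H = sum of 1/k for 0 < k < p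
   vanishes mod p for odd p (pair k with p - k). On the other hand,
   m^(p-1) = prod (m j / s_j) = prod (1 + p f_j / s_j), which is 1 + p (sum of f_j / s_j)
   modulo p^2, so q_p(m) is congruent to the sum of f_j / s_j. *)

lemma p_integral_iff_fraction:
  assumes "prime P"
  shows "p_integral P x \<longleftrightarrow> (\<exists>a b. \<not> P dvd b \<and> x = of_int a / of_int b)"
proof
  assume "p_integral P x"
  then show "\<exists>a b. \<not> P dvd b \<and> x = of_int a / of_int b"
    by (metis p_integral_def prod.collapse quotient_of_div)
next
  assume "\<exists>a b. \<not> P dvd b \<and> x = of_int a / of_int b"
  then obtain a b where b: "\<not> P dvd b" and x: "x = of_int a / of_int b"
    by blast
  obtain a' b' where q: "quotient_of x = (a', b')"
    by fastforce
  have "b \<noteq> 0" "b' \<noteq> 0"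
    using b quotient_of_denom_pos[OF q] by auto
  then have cross: "a * b' = a' * b"
    using x quotient_of_div[OF q] by (simp add: frac_eq_eq flip: of_int_mult of_int_eq_iff)
  show "p_integral P x"
  proof (rule ccontr)
    assume "\<not> p_integral P x"
    then have "P dvd b'"
      by (simp add: p_integral_def q)
    then have "P dvd a'"
      using cross b assms by (metis dvd_mult prime_dvd_mult_iff)
    then show False
      using \<open>P dvd b'\<close> quotient_of_coprime[OF q] assms
      by (metis coprime_common_divisor not_prime_unit)
  qed
qed

lemma p_integral_fraction:
  "prime P \<Longrightarrow> \<not> P dvd b \<Longrightarrow> p_integral P (of_int a / of_int b)"
  using p_integral_iff_fraction by blast

lemma p_integral_of_int: "prime P \<Longrightarrow> p_integral P (of_int a)"
  by (auto simp: p_integral_def quotient_of_int dest: prime_gt_1_int)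

lemma p_integral_zero: "prime P \<Longrightarrow> p_integral P 0"
  using p_integral_of_int[of P 0] by simp

lemma p_integral_of_nat: "prime P \<Longrightarrow> p_integral P (of_nat a)"
  using p_integral_of_int[of P "int a"] by simp

lemma p_integral_nat_fraction:
  fixes p a b :: nat
  shows "prime p \<Longrightarrow> \<not> p dvd b \<Longrightarrow> p_integral (int p) (of_nat a / of_nat b)"
  using p_integral_fraction[of "int p" "int b" "int a"] by simp

lemma p_integral_inverse_nat:
  fixes p b :: nat
  shows "prime p \<Longrightarrow> \<not> p dvd b \<Longrightarrow> p_integral (int p) (1 / of_nat b)"
  using p_integral_nat_fraction[of p b 1] by simp

lemma p_integral_add:
  assumes "prime P" "p_integral P x" "p_integral P y"
  shows "p_integral P (x + y)"
proof -
  obtain a b c d where bd: "\<not> P dvd b" "\<not> P dvd d"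
    and xy: "x = of_int a / of_int b" "y = of_int c / of_int d"
    using assms p_integral_iff_fraction by meson
  have "b \<noteq> 0" "d \<noteq> 0"
    using bd by auto
  then have "x + y = of_int (a * d + c * b) / of_int (b * d)"
    unfolding xy by (simp add: add_frac_eq)
  moreover have "\<not> P dvd b * d"
    using assms(1) bd by (simp add: prime_dvd_mult_iff)
  ultimately show ?thesis
    using assms(1) p_integral_fraction by metis
qed

lemma p_integral_mult:
  assumes "prime P" "p_integral P x" "p_integral P y"
  shows "p_integral P (x * y)"
proof -
  obtain a b c d where bd: "\<not> P dvd b" "\<not> P dvd d"
    and xy: "x = of_int a / of_int b" "y = of_int c / of_int d"
    using assms p_integral_iff_fraction by meson
  have "x * y = of_int (a * c) / of_int (b * d)"
    unfolding xy by simp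
  moreover have "\<not> P dvd b * d"
    using assms(1) bd by (simp add: prime_dvd_mult_iff)
  ultimately show ?thesis
    using assms(1) p_integral_fraction by metis
qed

lemma p_integral_uminus: "prime P \<Longrightarrow> p_integral P x \<Longrightarrow> p_integral P (- x)"
  using p_integral_mult[of P "of_int (-1)" x] p_integral_of_int[of P "-1"] by simp

lemma rat_cong_refl: "prime P \<Longrightarrow> p_integral P a \<Longrightarrow> rat_cong a a P"
  unfolding rat_cong_def using p_integral_zero by force

lemma rat_cong_sym: "prime P \<Longrightarrow> rat_cong a b P \<Longrightarrow> rat_cong b a P"
  unfolding rat_cong_def by (metis minus_diff_eq mult_minus_right p_integral_uminus)

lemma rat_cong_trans:
  assumes "prime P" "rat_cong a b P" "rat_cong b c P"
  shows "rat_cong a c P"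
proof -
  obtain u v where "p_integral P u" "a - b = of_int P * u" "p_integral P v" "b - c = of_int P * v"
    using assms(2,3) by (auto simp: rat_cong_def)
  moreover from this have "a - c = of_int P * (u + v)"
    by (simp add: algebra_simps)
  ultimately show ?thesis
    using assms by (auto simp: rat_cong_def p_integral_add)
qed

lemma rat_cong_add:
  assumes "prime P" "rat_cong a b P" "rat_cong c d P"
  shows "rat_cong (a + c) (b + d) P"
proof -
  obtain u v where "p_integral P u" "a - b = of_int P * u" "p_integral P v" "c - d = of_int P * v"
    using assms(2,3) by (auto simp: rat_cong_def)
  moreover from this have "a + c - (b + d) = of_int P * (u + v)"
    by (simp add: algebra_simps)
  ultimately show ?thesis
    using assms by (auto simp: rat_cong_def p_integral_add)
qed

lemma rat_cong_uminus: "prime P \<Longrightarrow> rat_cong a b P \<Longrightarrow> rat_cong (- a) (- b) P"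
  unfolding rat_cong_def by (metis minus_diff_eq minus_diff_minus mult_minus_right p_integral_uminus)

lemma rat_cong_diff:
  "prime P \<Longrightarrow> rat_cong a b P \<Longrightarrow> rat_cong c d P \<Longrightarrow> rat_cong (a - c) (b - d) P"
  using rat_cong_add[of P a b "- c" "- d"] rat_cong_uminus by simp

lemma rat_cong_mult:
  assumes "prime P" "rat_cong a b P" "rat_cong c d P"
  shows "rat_cong (a * c) (b * d) P"
proof -
  obtain u v where "p_integral P u" "a - b = of_int P * u" "p_integral P v" "c - d = of_int P * v"
    using assms(2,3) by (auto simp: rat_cong_def)
  moreover from this have "a * c - b * d = of_int P * (u * c + b * v)"
    by (simp add: algebra_simps)
  ultimately show ?thesis
    using assms by (auto simp: rat_cong_def p_integral_add p_integral_mult)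
qed

lemma rat_cong_sum:
  "prime P \<Longrightarrow> (\<And>j. j \<in> A \<Longrightarrow> rat_cong (f j) (g j) P) \<Longrightarrow>
    rat_cong (\<Sum>j\<in>A. f j) (\<Sum>j\<in>A. g j) P"
  by (induction A rule: infinite_finite_induct)
    (auto simp: rat_cong_add rat_cong_refl p_integral_zero)

lemma rat_cong_multiple: "prime P \<Longrightarrow> p_integral P u \<Longrightarrow> rat_cong (of_int P * u) 0 P"
  unfolding rat_cong_def by (auto simp: p_integral_mult p_integral_zero p_integral_of_int)

lemma rat_cong_prod_one_plus:
  assumes "prime P" "finite A" "\<And>j. j \<in> A \<Longrightarrow> p_integral P (x j)"
  shows "rat_cong (((\<Prod>j\<in>A. 1 + of_int P * x j) - 1) / of_int P) (\<Sum>j\<in>A. x j) P"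
  using assms(2,3)
proof (induction A rule: finite_induct)
  case empty
  then show ?case
    using assms(1) by (simp add: rat_cong_refl p_integral_zero)
next
  case (insert i A)
  define a where "a = ((\<Prod>j\<in>A. 1 + of_int P * x j) - 1) / of_int P"
  have "P \<noteq> 0"
    using assms(1) by auto
  have IH: "rat_cong a (\<Sum>j\<in>A. x j) P"
    using insert by (simp add: a_def)
  have xi: "p_integral P (x i)" and "p_integral P a"
    using insert.prems IH by (auto simp: rat_cong_def)
  have "((\<Prod>j\<in>insert i A. 1 + of_int P * x j) - 1) / of_int P = (x i + a) + of_int P * (x i * a)"
    using insert.hyps \<open>P \<noteq> 0\<close> by (simp add: a_def field_simps)
  moreover have "rat_cong ((x i + a) + of_int P * (x i * a)) ((x i + a) + 0) P"
    using assms(1) xi \<open>p_integral P a\<close>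
    by (intro rat_cong_add rat_cong_refl rat_cong_multiple p_integral_add p_integral_mult)
  moreover have "rat_cong (x i + a) (\<Sum>j\<in>insert i A. x j) P"
    using assms(1) insert.hyps xi IH by (simp add: rat_cong_add rat_cong_refl)
  ultimately show ?case
    using assms(1) by (metis add_0_right rat_cong_trans)
qed

lemma bij_betw_mult_mod:
  fixes m p :: nat
  assumes "coprime m p"
  shows "bij_betw (\<lambda>j. m * j mod p) {1..<p} {1..<p}"
proof -
  have "inj_on (\<lambda>j. m * j mod p) {1..<p}"
  proof (rule inj_onI)
    fix i j assume "i \<in> {1..<p}" "j \<in> {1..<p}" "m * i mod p = m * j mod p"
    then show "i = j"
      using cong_mult_lcancel_nat[OF assms] by (simp add: cong_def)
  qed
  moreover have "m * j mod p \<in> {1..<p}" if j: "j \<in> {1..<p}" for j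
  proof -
    have "\<not> p dvd j"
      using j by (auto dest: dvd_imp_le)
    then have "\<not> p dvd m * j"
      using assms by (simp add: coprime_commute coprime_dvd_mult_right_iff)
    then show ?thesis
      using j by (simp add: mod_greater_zero_iff_not_dvd Suc_le_eq)
  qed
  ultimately show ?thesis
    unfolding bij_betw_def by (metis endo_inj_surj finite_atLeastLessThan image_subsetI)
qed

lemma mult_minus_complement_mod_eq:
  fixes n p :: nat
  assumes "0 < p"
  shows "(n div p + 1) * p - (p - n mod p) = n"
proof -
  have "n mod p < p"
    using assms by simp
  then show ?thesis
    by (simp add: algebra_simps)
qed

lemma div_mod_mult_minus:
  fixes r k p :: nat
  assumes "0 < r" "0 < k" "k < p"
  shows "(r * p - k) div p = r - 1" "(r * p - k) mod p = p - k"
proof -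
  obtain r' where r: "r = Suc r'"
    using assms(1) gr0_implies_Suc by blast
  then have eq: "r * p - k = (p - k) + r' * p"
    using assms by simp
  show "(r * p - k) div p = r - 1" "(r * p - k) mod p = p - k"
    unfolding eq using assms r by (simp_all only: div_mult_self1 mod_mult_self1) simp_all
qed

lemma K_eq_sum_dvd_nat:
  fixes p r m :: nat
  assumes "0 < r"
  shows "K p r m = (\<Sum>k\<in>{k\<in>{1..<p}. m dvd r * p - k}. 1 / of_nat k)"
proof -
  have "int m dvd (int k - int r * int p) \<longleftrightarrow> m dvd r * p - k" if "k < p" for k
  proof -
    have "p \<le> r * p"
      using assms by simp
    then have "k \<le> r * p"
      using that by linarith
    then have "int k - int r * int p = - int (r * p - k)"
      by (simp add: of_nat_diff)
    then show ?thesis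
      by simp
  qed
  then show ?thesis
    unfolding K_def by (intro sum.cong) auto
qed

lemma sum_times_K_eq:
  fixes p m :: nat
  assumes "0 < m" "coprime m p"
  shows "(\<Sum>r=1..m. of_nat r * K p r m) =
    (\<Sum>j\<in>{1..<p}. of_nat (m * j div p + 1) / of_nat (p - m * j mod p))"
proof -
  define S where "S r = {k\<in>{1..<p}. m dvd r * p - k}" for r
  define pair where "pair j = (m * j div p + 1, p - m * j mod p)" for j
  define unpair where "unpair = (\<lambda>(r, k). (r * p - k) div m)"
  have unpair: "unpair a \<in> {1..<p} \<and> pair (unpair a) = a" if a_mem: "a \<in> Sigma {1..m} S" for a
  proof -
    obtain r k where a: "a = (r, k)" and "r \<in> {1..m}" "k \<in> S r"
      using a_mem by blast
    then have rk: "0 < r" "r \<le> m" "0 < k" "k < p" "m dvd r * p - k"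
      by (auto simp: S_def)
    then have mt: "m * unpair a = r * p - k"
      by (simp add: unpair_def a)
    have "p \<le> r * p"
      using rk by simp
    then have "0 < r * p - k" "r * p - k < r * p"
      using rk by linarith+
    moreover have "r * p \<le> m * p"
      using rk by simp
    ultimately have "0 < m * unpair a" "m * unpair a < m * p"
      using mt by linarith+
    then have "unpair a \<in> {1..<p}"
      by auto
    moreover have "pair (unpair a) = a"
      unfolding pair_def mt using div_mod_mult_minus[of r k p] rk a by simp
    ultimately show ?thesis ..
  qed
  have pair: "pair j \<in> Sigma {1..m} S \<and> unpair (pair j) = j" if "j \<in> {1..<p}" for j
  proof -
    have s: "m * j mod p \<in> {1..<p}"
      using bij_betwE[OF bij_betw_mult_mod[OF assms(2)]] that by blast
    have "m * j div p < m"
      using that assms(1) by (simp add: div_less_iff_less_mult)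
    moreover have "(m * j div p + 1) * p - (p - m * j mod p) = m * j"
      using that by (simp add: mult_minus_complement_mod_eq)
    ultimately show ?thesis
      using s assms(1) by (auto simp: pair_def unpair_def S_def)
  qed
  have "(\<Sum>r=1..m. of_nat r * K p r m) = (\<Sum>r\<in>{1..m}. \<Sum>k\<in>S r. of_nat r / of_nat k)"
    by (simp add: K_eq_sum_dvd_nat S_def sum_distrib_left)
  also have "\<dots> = (\<Sum>(r, k)\<in>Sigma {1..m} S. of_nat r / of_nat k)"
    by (rule sum.Sigma) (auto simp: S_def)
  also have "\<dots> = (\<Sum>j\<in>{1..<p}. (\<lambda>(r, k). of_nat r / of_nat k) (pair j))"
    by (rule sum.reindex_bij_witness[where i = pair and j = unpair]) (use pair unpair in auto)
  finally show ?thesis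
    by (simp add: pair_def)
qed

lemma power_eq_prod_one_plus_quotients:
  fixes m p :: nat
  assumes "coprime m p"
  shows "(of_nat m ^ (p - 1) :: 'a :: field_char_0) =
    (\<Prod>j\<in>{1..<p}. 1 + of_nat p * (of_nat (m * j div p) / of_nat (m * j mod p)))"
proof -
  have bij: "bij_betw (\<lambda>j. m * j mod p) {1..<p} {1..<p}"
    using assms by (rule bij_betw_mult_mod)
  have "1 + of_nat p * (of_nat (m * j div p) / of_nat (m * j mod p)) =
      (of_nat m * of_nat j / of_nat (m * j mod p) :: 'a)" if "j \<in> {1..<p}" for j
  proof -
    have "m * j mod p \<noteq> 0"
      using bij_betwE[OF bij] that by fastforce
    moreover have "(of_nat m * of_nat j :: 'a) = of_nat (m * j div p) * of_nat p + of_nat (m * j mod p)"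
      by (metis div_mult_mod_eq of_nat_add of_nat_mult)
    ultimately show ?thesis
      by (simp add: field_simps)
  qed
  then have "(\<Prod>j\<in>{1..<p}. 1 + of_nat p * (of_nat (m * j div p) / of_nat (m * j mod p))) =
      (\<Prod>j\<in>{1..<p}. of_nat m * of_nat j) / (\<Prod>j\<in>{1..<p}. of_nat (m * j mod p) :: 'a)"
    by (simp add: prod_dividef)
  also have "(\<Prod>j\<in>{1..<p}. of_nat (m * j mod p) :: 'a) = (\<Prod>j\<in>{1..<p}. of_nat j)"
    using prod.reindex_bij_betw[OF bij, of of_nat] .
  also have "(\<Prod>j\<in>{1..<p}. of_nat m * of_nat j :: 'a) = of_nat m ^ (p - 1) * (\<Prod>j\<in>{1..<p}. of_nat j)"
    by (simp add: prod.distrib)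
  finally show ?thesis
    by simp
qed

lemma fermat_quotient_cong_sum_quotients:
  fixes m p :: nat
  assumes "prime p" "\<not> p dvd m"
  shows "rat_cong (fermat_quotient p m)
    (\<Sum>j\<in>{1..<p}. of_nat (m * j div p) / of_nat (m * j mod p)) (int p)"
proof -
  have "coprime m p"
    using prime_imp_coprime[OF assms] by (simp add: coprime_commute)
  have "p_integral (int p) (of_nat (m * j div p) / of_nat (m * j mod p))" if "j \<in> {1..<p}" for j
  proof -
    have "m * j mod p \<in> {1..<p}"
      using bij_betwE[OF bij_betw_mult_mod[OF \<open>coprime m p\<close>]] that by blast
    then have "\<not> p dvd m * j mod p"
      by (auto dest: nat_dvd_not_less)
    then show ?thesis
      by (rule p_integral_nat_fraction[OF assms(1)])
  qed
  from rat_cong_prod_one_plus[OF _ finite_atLeastLessThan this]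
  show ?thesis
    using assms(1) unfolding fermat_quotient_def power_eq_prod_one_plus_quotients[OF \<open>coprime m p\<close>]
    by simp
qed

lemma inverse_complement_cong:
  fixes p k :: nat
  assumes "prime p" "0 < k" "k < p"
  shows "rat_cong (1 / of_nat (p - k)) (- (1 / of_nat k)) (int p)"
proof -
  have k: "\<not> p dvd k" and pk: "\<not> p dvd (p - k)"
    using assms nat_dvd_not_less[of k p] nat_dvd_not_less[of "p - k" p] by auto
  then have "\<not> p dvd k * (p - k)"
    using assms(1) by (simp add: prime_dvd_mult_iff)
  then have "p_integral (int p) (1 / of_nat (k * (p - k)))"
    by (rule p_integral_inverse_nat[OF assms(1)])
  moreover have "p_integral (int p) (1 / of_nat (p - k))" "p_integral (int p) (- (1 / of_nat k))"
    using k pk by (simp_all add: p_integral_inverse_nat p_integral_uminus assms(1))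
  moreover have "1 / of_nat (p - k) - - (1 / of_nat k) = of_int (int p) * (1 / of_nat (k * (p - k)) :: rat)"
    using assms by (simp add: field_simps of_nat_diff)
  ultimately show ?thesis
    unfolding rat_cong_def by blast
qed

lemma harmonic_cong_zero:
  fixes p :: nat
  assumes "prime p" "odd p"
  shows "rat_cong (\<Sum>k\<in>{1..<p}. 1 / of_nat k) 0 (int p)"
proof -
  let ?H = "\<Sum>k\<in>{1..<p}. 1 / of_nat k :: rat"
  have P: "prime (int p)"
    using assms(1) by simp
  have "(\<Sum>k\<in>{1..<p}. 1 / of_nat (p - k)) = ?H"
    by (rule sum.reindex_bij_witness[where i = "\<lambda>k. p - k" and j = "\<lambda>k. p - k"]) auto
  then have "2 * ?H = (\<Sum>k\<in>{1..<p}. 1 / of_nat (p - k) + 1 / of_nat k)"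
    by (simp add: sum.distrib)
  moreover have "rat_cong (\<Sum>k\<in>{1..<p}. 1 / of_nat (p - k) + 1 / of_nat k)
      (\<Sum>k\<in>{1..<p}. - (1 / of_nat k) + 1 / of_nat k) (int p)"
    using assms(1) P
    by (intro rat_cong_sum rat_cong_add inverse_complement_cong rat_cong_refl p_integral_inverse_nat)
      (auto dest: nat_dvd_not_less)
  ultimately have "rat_cong (2 * ?H) 0 (int p)"
    by simp
  moreover have "p_integral (int p) (1 / 2)"
    using p_integral_inverse_nat[of p 2] assms primes_dvd_imp_eq[OF assms(1) two_is_prime_nat] by auto
  ultimately have "rat_cong (1 / 2 * (2 * ?H)) (1 / 2 * 0) (int p)"
    using P by (intro rat_cong_mult rat_cong_refl)
  then show ?thesis
    by simp
qed

lemma sum_times_K_cong_quotients: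
  fixes p m :: nat
  assumes "prime p" "0 < m" "\<not> p dvd m"
  shows "rat_cong (\<Sum>r=1..m. of_nat r * K p r m)
    (- (\<Sum>j\<in>{1..<p}. of_nat (m * j div p) / of_nat (m * j mod p)) - (\<Sum>k\<in>{1..<p}. 1 / of_nat k))
    (int p)"
proof -
  define f where "f j = m * j div p" for j
  define s where "s j = m * j mod p" for j
  have P: "prime (int p)"
    using assms(1) by simp
  have "coprime m p"
    using prime_imp_coprime[OF assms(1,3)] by (simp add: coprime_commute)
  then have bij: "bij_betw s {1..<p} {1..<p}"
    unfolding s_def by (rule bij_betw_mult_mod)
  have "(\<Sum>r=1..m. of_nat r * K p r m) = (\<Sum>j\<in>{1..<p}. of_nat (f j + 1) * (1 / of_nat (p - s j)))"
    using sum_times_K_eq[OF assms(2) \<open>coprime m p\<close>] by (simp add: f_def s_def)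
  moreover have "rat_cong (\<Sum>j\<in>{1..<p}. of_nat (f j + 1) * (1 / of_nat (p - s j)))
      (\<Sum>j\<in>{1..<p}. of_nat (f j + 1) * - (1 / of_nat (s j))) (int p)"
    using bij_betwE[OF bij] assms(1) P
    by (intro rat_cong_sum rat_cong_mult rat_cong_refl inverse_complement_cong p_integral_of_nat)
      (auto simp: Suc_le_eq)
  moreover have "(\<Sum>j\<in>{1..<p}. of_nat (f j + 1) * - (1 / of_nat (s j))) =
      - (\<Sum>j\<in>{1..<p}. of_nat (f j) / of_nat (s j)) - (\<Sum>j\<in>{1..<p}. 1 / of_nat (s j) :: rat)"
    by (simp add: add_divide_distrib sum_subtractf sum_negf)
  moreover have "(\<Sum>j\<in>{1..<p}. 1 / of_nat (s j)) = (\<Sum>k\<in>{1..<p}. 1 / of_nat k :: rat)"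
    using sum.reindex_bij_betw[OF bij, of "\<lambda>k. 1 / of_nat k"] .
  ultimately show ?thesis
    by (simp add: f_def s_def)
qed

theorem corollary2p2:
  fixes p m :: nat
  assumes "prime p" and "odd p" and "m > 0" and "\<not> p dvd m"
  shows "rat_cong (\<Sum>r=1..m. of_nat r * K p r m) (- fermat_quotient p m) (int p)"
proof -
  have P: "prime (int p)"
    using assms(1) by simp
  have "rat_cong
      (- (\<Sum>j\<in>{1..<p}. of_nat (m * j div p) / of_nat (m * j mod p)) - (\<Sum>k\<in>{1..<p}. 1 / of_nat k))
      (- fermat_quotient p m - 0) (int p)"
    using fermat_quotient_cong_sum_quotients[OF assms(1,4)] harmonic_cong_zero[OF assms(1,2)] P
    by (intro rat_cong_diff rat_cong_uminus) (simp_all add: rat_cong_sym)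
  then show ?thesis
    using sum_times_K_cong_quotients[OF assms(1,3,4)] rat_cong_trans[OF P] by simp
qed

end
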